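(* Let $B$ be a nonzero real vector space, $\lfloor\cdot,\cdot\rfloor$ a symmetric bilinear form on $B$, $q(b):=\tfrac12\lfloor b,b\rfloor$, let $f$ be a BC--function on $B$ and $c\in B$. Define $f_c\colon B\to\,]{-}\infty,\infty]$ by $f_c(b):=f(b+c)-\lfloor b,c\rfloor-q(c)$. Then $f_c$ is a BC--function, $\mathrm{dom}\,f_c=\mathrm{dom}\,f-c$ and ${\cal P}_q(f_c)={\cal P}_q(f)-c$.
   Context: For a proper convex $f\colon B\to\,]{-}\infty,\infty]$, $\mathrm{dom}\,f:=\{b\colon f(b)\in\mathbb{R}\}$ and $f^@(c):=\sup_{b\in B}[\lfloor b,c\rfloor-f(b)]$. A BC--function is a proper convex $f$ with $f^@(b)\ge f(b)\ge q(b)$ for all $b\in B$. For $h\ge q$, ${\cal P}_q(h):=\{b\colon h(b)=q(b)\}$. *)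

theory Defs
  imports "HOL-Analysis.Analysis"
begin

text \<open>Functions B \<rightarrow> ]-\<infinity>,\<infinity>] are modelled as ereal-valued functions that never take -\<infinity>.
  The symmetric bilinear form is a parameter bl.\<close>

definition qf :: "('a \<Rightarrow> 'a \<Rightarrow> real) \<Rightarrow> 'a \<Rightarrow> real" where
  "qf bl b = bl b b / 2"

definition proper_convex :: "('a::real_vector \<Rightarrow> ereal) \<Rightarrow> bool" where
  "proper_convex f \<longleftrightarrow>
     (\<forall>b. f b \<noteq> -\<infinity>) \<and> (\<exists>b. f b \<noteq> \<infinity>) \<and>
     (\<forall>x y t. 0 < t \<and> t < 1 \<longrightarrow>
        f ((1 - t) *\<^sub>R x + t *\<^sub>R y) \<le> ereal (1 - t) * f x + ereal t * f y)"

definition edom :: "('a \<Rightarrow> ereal) \<Rightarrow> 'a set" where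
  "edom f = {b. f b \<noteq> \<infinity> \<and> f b \<noteq> -\<infinity>}"

definition fconj :: "('a \<Rightarrow> 'a \<Rightarrow> real) \<Rightarrow> ('a \<Rightarrow> ereal) \<Rightarrow> 'a \<Rightarrow> ereal" where
  "fconj bl f c = (SUP b. ereal (bl b c) - f b)"

definition BC_function :: "('a::real_vector \<Rightarrow> 'a \<Rightarrow> real) \<Rightarrow> ('a \<Rightarrow> ereal) \<Rightarrow> bool" where
  "BC_function bl f \<longleftrightarrow> proper_convex f \<and>
     (\<forall>b. fconj bl f b \<ge> f b \<and> f b \<ge> ereal (qf bl b))"

definition Pq :: "('a \<Rightarrow> 'a \<Rightarrow> real) \<Rightarrow> ('a \<Rightarrow> ereal) \<Rightarrow> 'a set" where
  "Pq bl h = {b. h b = ereal (qf bl b)}"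

end

theory Submission
  imports Defs
begin

text \<open>Write \<open>f\<^sub>c(b) = f(b + c) - (\<lfloor>b,c\<rfloor> + q(c))\<close> (\<open>qshift bl c f\<close> below). It is a
  translate of \<open>f\<close> minus an affine function, hence proper and convex. Since
  \<open>q(b + c) = q(b) + \<lfloor>b,c\<rfloor> + q(c)\<close>, we have \<open>f\<^sub>c - q = (f - q)(\<cdot> + c)\<close>, which gives
  \<open>f\<^sub>c \<ge> q\<close> and the description of \<open>\<P>\<^sub>q(f\<^sub>c)\<close>. Reindexing the supremum by \<open>b \<mapsto> b + c\<close>
  shows that conjugation commutes with the operation, \<open>(f\<^sub>c)\<^sup>@ = (f\<^sup>@)\<^sub>c\<close>, so \<open>f\<^sup>@ \<ge> f\<close>
  passes to \<open>(f\<^sub>c)\<^sup>@ \<ge> f\<^sub>c\<close>.\<close>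

definition qshift :: "('a::real_vector \<Rightarrow> 'a \<Rightarrow> real) \<Rightarrow> 'a \<Rightarrow> ('a \<Rightarrow> ereal) \<Rightarrow> 'a \<Rightarrow> ereal" where
  "qshift bl c f = (\<lambda>b. f (b + c) - ereal (bl b c) - ereal (qf bl c))"

lemma qshift_eq: "qshift bl c f b = f (b + c) - ereal (bl b c + qf bl c)"
  unfolding qshift_def by (cases "f (b + c)") auto

lemma qf_add:
  assumes "bilinear bl" and "\<And>x y. bl x y = bl y x"
  shows "qf bl (b + c) = qf bl b + (bl b c + qf bl c)"
  unfolding qf_def
  using bilinear_ladd[OF assms(1)] bilinear_radd[OF assms(1)] assms(2)[of c b]
  by (simp add: field_simps)

lemma image_minus_const_eq: "(\<lambda>b. b - c) ` S = {b::'a::ab_group_add. b + c \<in> S}"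
  by (force simp: image_iff)

lemma ereal_convex_comb_minus:
  fixes A B :: ereal
  assumes "A \<noteq> -\<infinity>" "B \<noteq> -\<infinity>" "0 \<le> t" "t \<le> 1"
  shows "ereal (1 - t) * A + ereal t * B - ereal ((1 - t) * u + t * v)
       = ereal (1 - t) * (A - ereal u) + ereal t * (B - ereal v)"
  using assms by (cases A; cases B) (auto simp: algebra_simps)

lemma proper_convex_translate:
  assumes "proper_convex f"
  shows "proper_convex (\<lambda>b. f (b + c))"
  unfolding proper_convex_def
proof (intro conjI allI impI)
  show "f (b + c) \<noteq> -\<infinity>" for b
    using assms by (simp add: proper_convex_def)
  obtain b where "f b \<noteq> \<infinity>"
    using assms by (auto simp: proper_convex_def)
  then show "\<exists>b. f (b + c) \<noteq> \<infinity>"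
    by (metis diff_add_cancel)
next
  fix x y and t :: real
  assume "0 < t \<and> t < 1"
  moreover have "(1 - t) *\<^sub>R x + t *\<^sub>R y + c = (1 - t) *\<^sub>R (x + c) + t *\<^sub>R (y + c)"
    by (simp add: algebra_simps)
  ultimately show "f ((1 - t) *\<^sub>R x + t *\<^sub>R y + c) \<le> ereal (1 - t) * f (x + c) + ereal t * f (y + c)"
    using assms by (simp add: proper_convex_def)
qed

lemma proper_convex_minus_affine:
  assumes "proper_convex f" and "linear l"
  shows "proper_convex (\<lambda>b. f b - ereal (l b + k))"
  unfolding proper_convex_def
proof (intro conjI allI impI)
  have ninf: "f b \<noteq> -\<infinity>" for b
    using assms(1) by (simp add: proper_convex_def)
  then show "f b - ereal (l b + k) \<noteq> -\<infinity>" for b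
    by (cases "f b") auto
  obtain b where "f b \<noteq> \<infinity>"
    using assms(1) by (auto simp: proper_convex_def)
  then have "f b - ereal (l b + k) \<noteq> \<infinity>"
    by (cases "f b") auto
  then show "\<exists>b. f b - ereal (l b + k) \<noteq> \<infinity>" ..
  fix x y and t :: real
  assume t: "0 < t \<and> t < 1"
  have "l ((1 - t) *\<^sub>R x + t *\<^sub>R y) + k = (1 - t) * (l x + k) + t * (l y + k)"
    by (simp add: linear_add[OF assms(2)] linear_scale[OF assms(2)]) (simp add: algebra_simps)
  moreover have "f ((1 - t) *\<^sub>R x + t *\<^sub>R y) \<le> ereal (1 - t) * f x + ereal t * f y"
    using assms(1) t by (simp add: proper_convex_def)
  ultimately show "f ((1 - t) *\<^sub>R x + t *\<^sub>R y) - ereal (l ((1 - t) *\<^sub>R x + t *\<^sub>R y) + k)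
      \<le> ereal (1 - t) * (f x - ereal (l x + k)) + ereal t * (f y - ereal (l y + k))"
    using ereal_convex_comb_minus[OF ninf ninf, of t] t
    by (metis ereal_minus_mono order_refl less_imp_le)
qed

lemma proper_convex_qshift:
  assumes "bilinear bl" and "proper_convex f"
  shows "proper_convex (qshift bl c f)"
proof -
  have "linear (\<lambda>b. bl b c)"
    using assms(1) by (simp add: bilinear_def)
  then show ?thesis
    unfolding qshift_eq[abs_def]
    by (intro proper_convex_minus_affine proper_convex_translate assms(2))
qed

lemma edom_qshift: "edom (qshift bl c f) = (\<lambda>b. b - c) ` edom f"
proof -
  have "qshift bl c f b \<in> {\<infinity>, -\<infinity>} \<longleftrightarrow> f (b + c) \<in> {\<infinity>, -\<infinity>}" for b
    unfolding qshift_eq by (cases "f (b + c)") auto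
  then show ?thesis
    unfolding edom_def image_minus_const_eq by auto
qed

lemma qf_le_qshift_iff:
  assumes "bilinear bl" and "\<And>x y. bl x y = bl y x"
  shows "ereal (qf bl b) \<le> qshift bl c f b \<longleftrightarrow> ereal (qf bl (b + c)) \<le> f (b + c)"
  unfolding qshift_eq qf_add[OF assms] by (cases "f (b + c)") auto

lemma qshift_eq_qf_iff:
  assumes "bilinear bl" and "\<And>x y. bl x y = bl y x"
  shows "qshift bl c f b = ereal (qf bl b) \<longleftrightarrow> f (b + c) = ereal (qf bl (b + c))"
  unfolding qshift_eq qf_add[OF assms] by (cases "f (b + c)") auto

lemma Pq_qshift:
  assumes "bilinear bl" and "\<And>x y. bl x y = bl y x"
  shows "Pq bl (qshift bl c f) = (\<lambda>b. b - c) ` Pq bl f"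
  unfolding Pq_def image_minus_const_eq qshift_eq_qf_iff[OF assms] by simp

lemma SUP_translate: "(SUP b. h (b + c)) = (SUP b. h b)" for c :: "'a::ab_group_add"
proof -
  have "range (\<lambda>b. b + c) = UNIV"
    by (metis diff_add_cancel surj_def)
  then show ?thesis
    by (metis image_image)
qed

lemma fconj_qshift:
  assumes "bilinear bl" and "\<And>x y. bl x y = bl y x"
  shows "fconj bl (qshift bl c f) = qshift bl c (fconj bl f)"
proof
  fix d
  define K where "K = bl c d + qf bl c"
  have "bl b d + (bl b c + qf bl c) = bl (b + c) (d + c) - K" for b
    unfolding K_def qf_def
    using bilinear_ladd[OF assms(1)] bilinear_radd[OF assms(1)] assms(2)[of b c] assms(2)[of c d]
    by (simp add: algebra_simps)
  then have "ereal (bl b d) - qshift bl c f b = ereal (bl (b + c) (d + c)) - f (b + c) - ereal K" for b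
    unfolding qshift_eq by (cases "f (b + c)") auto
  then have "fconj bl (qshift bl c f) d = (SUP b. ereal (bl (b + c) (d + c)) - f (b + c)) - ereal K"
    unfolding fconj_def by (simp add: SUP_ereal_minus_left)
  also have "\<dots> = fconj bl f (d + c) - ereal K"
    unfolding fconj_def SUP_translate[of "\<lambda>b. ereal (bl b (d + c)) - f b"] ..
  also have "\<dots> = qshift bl c (fconj bl f) d"
    unfolding qshift_eq K_def assms(2)[of c d] ..
  finally show "fconj bl (qshift bl c f) d = qshift bl c (fconj bl f) d" .
qed

lemma BC_function_qshift:
  assumes "bilinear bl" and "\<And>x y. bl x y = bl y x" and "BC_function bl f"
  shows "BC_function bl (qshift bl c f)"
  unfolding BC_function_def
proof (intro conjI allI)
  show "proper_convex (qshift bl c f)"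
    using assms(1,3) by (simp add: proper_convex_qshift BC_function_def)
  fix b
  have "f (b + c) \<le> fconj bl f (b + c)"
    using assms(3) by (simp add: BC_function_def)
  then show "qshift bl c f b \<le> fconj bl (qshift bl c f) b"
    unfolding fconj_qshift[OF assms(1,2)] qshift_eq by (rule ereal_minus_mono) simp
  show "ereal (qf bl b) \<le> qshift bl c f b"
    using assms(3) by (simp add: qf_le_qshift_iff[OF assms(1,2)] BC_function_def)
qed

theorem lemma3p13:
  fixes bl :: "'a::real_vector \<Rightarrow> 'a \<Rightarrow> real"
    and f :: "'a \<Rightarrow> ereal" and c :: 'a
  assumes "\<exists>b::'a. b \<noteq> 0"
    and "bilinear bl"
    and "\<forall>x y. bl x y = bl y x"
    and "BC_function bl f"
  shows "BC_function bl (\<lambda>b. f (b + c) - ereal (bl b c) - ereal (qf bl c))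
       \<and> edom (\<lambda>b. f (b + c) - ereal (bl b c) - ereal (qf bl c)) = (\<lambda>b. b - c) ` edom f
       \<and> Pq bl (\<lambda>b. f (b + c) - ereal (bl b c) - ereal (qf bl c)) = (\<lambda>b. b - c) ` Pq bl f"
proof -
  have sym: "\<And>x y. bl x y = bl y x"
    using assms(3) by blast
  show ?thesis
    unfolding qshift_def[symmetric]
    using BC_function_qshift[OF assms(2) sym assms(4)] edom_qshift Pq_qshift[OF assms(2) sym]
    by blast
qed

end
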